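(* There is an absolute constant $c$ such that for all positive integers $N,\ell,k$ with $k\le N$, $\chi(\mathcal U_{N,\ell,k})\le 2^{c k\log_2(\ell+1)}\cdot\log^{(\lfloor (k-1)/\ell\rfloor-1)}N$, where $\log^{(i)}N$ is interpreted as $N$ for $i\le 0$.
   Context: $[N]=\{1,\dots,N\}$, $S_N$ is the set of permutations of $[N]$. For $\pi,\sigma\in S_N$, $\delta(\pi,\sigma)=\max_{i\in[N]}|\pi^{-1}(i)-\sigma^{-1}(i)|$. For $1\le k\le N$, $S_{N,k}$ is the set of injective maps $[k]\to[N]$; a permutation $\pi'\in S_N$ extends $\pi\in S_{N,k}$ if $\pi'(i)=\pi(i)$ for all $i\in[k]$. For $\pi,\sigma\in S_{N,k}$, $\delta(\pi,\sigma)=\min\{\delta(\pi',\sigma'):\pi',\sigma'\in S_N$ extending $\pi,\sigma$ respectively$\}$. The $k$-restricted uncertainty graph $\mathcal U_{N,\ell,k}$ has vertex set $S_{N,k}$, with $\pi\sim\sigma$ iff $\pi(1)\ne\sigma(1)$ and $\delta(\pi,\sigma)\le\ell$. $\log^{(i)}$ denotes the $i$-fold iterated base-2 logarithm. $\chi$ denotes chromatic number. *)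

theory Defs
  imports Complex_Main "HOL-Library.FuncSet" "HOL-Combinatorics.Permutations"
begin

definition perm_dist :: "nat \<Rightarrow> (nat \<Rightarrow> nat) \<Rightarrow> (nat \<Rightarrow> nat) \<Rightarrow> nat" where
  "perm_dist N p q = Max ((\<lambda>i. nat \<bar>int (inv p i) - int (inv q i)\<bar>) ` {1..N})"

definition partial_perms :: "nat \<Rightarrow> nat \<Rightarrow> (nat \<Rightarrow> nat) set" where
  "partial_perms N k = {f \<in> {1..k} \<rightarrow>\<^sub>E {1..N}. inj_on f {1..k}}"

definition extends :: "nat \<Rightarrow> (nat \<Rightarrow> nat) \<Rightarrow> (nat \<Rightarrow> nat) \<Rightarrow> bool" where
  "extends k p f \<longleftrightarrow> (\<forall>i\<in>{1..k}. p i = f i)"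

definition partial_dist :: "nat \<Rightarrow> nat \<Rightarrow> (nat \<Rightarrow> nat) \<Rightarrow> (nat \<Rightarrow> nat) \<Rightarrow> nat" where
  "partial_dist N k f g = Min {perm_dist N p q | p q.
      p permutes {1..N} \<and> q permutes {1..N} \<and> extends k p f \<and> extends k q g}"

definition unc_adj :: "nat \<Rightarrow> nat \<Rightarrow> nat \<Rightarrow> (nat \<Rightarrow> nat) \<Rightarrow> (nat \<Rightarrow> nat) \<Rightarrow> bool" where
  "unc_adj N l k f g \<longleftrightarrow> f 1 \<noteq> g 1 \<and> partial_dist N k f g \<le> l"

definition chromatic_number :: "'a set \<Rightarrow> ('a \<Rightarrow> 'a \<Rightarrow> bool) \<Rightarrow> nat" where
  "chromatic_number V E = (LEAST n. \<exists>col :: 'a \<Rightarrow> nat.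
      (\<forall>v\<in>V. col v < n) \<and> (\<forall>u\<in>V. \<forall>v\<in>V. E u v \<longrightarrow> col u \<noteq> col v))"

text \<open>iterated base-2 logarithm, floored at 1 after each step; equals x for i \<le> 0\<close>
fun ilog_nat :: "nat \<Rightarrow> real \<Rightarrow> real" where
  "ilog_nat 0 x = x"
| "ilog_nat (Suc n) x = max 1 (log 2 (ilog_nat n x))"

definition ilog :: "int \<Rightarrow> real \<Rightarrow> real" where
  "ilog i x = ilog_nat (nat i) x"

end

theory Submission
  imports Defs
begin

(* The first value f 1 already gives a proper colouring with N colours.  The bound is
   then improved in rounds, each of which passes from k' to k' + l positions.  If f and g
   are adjacent in U_{N,l,k'+l}, then their restrictions to [k'] are adjacent in
   U_{N,l,k'} and the restriction of g is "near" f: each g j equals some f i with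
   |i - j| <= l.  So, given a colouring of U_{N,l,k'} with M <= 2^s colours, encode the
   colours by a code with T = D s letters, any two codewords agreeing in fewer than s
   positions, where D >= (2l+1)^k' bounds the number of restrictions near f.  Some
   coordinate t separates the colour of f from the colours of all nearby restrictions, and
   (t, letter at t) is a proper colour in U_{N,l,k'+l}.  This turns R colours into
   O(D^2 log^2 R) colours, so after m = (k-1) div l rounds the number of colours is
   2^{O(k log(l+1))} times the (m-1)-fold iterated logarithm of N. *)

text \<open>Every injective map [k] \<rightarrow> [N] extends to a permutation of [N]; in particular the
  minimum in the definition of the partial distance ranges over a nonempty set.\<close>
lemma partial_perm_extends:
  assumes f: "f \<in> partial_perms N k"
  shows "\<exists>p. p permutes {1..N} \<and> extends k p f"
proof -
  let ?A = "{1..k}" and ?U = "{1..N::nat}"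
  have inj: "inj_on f ?A" and img: "f ` ?A \<subseteq> ?U"
    using f by (auto simp: partial_perms_def PiE_def Pi_def)
  have "card ?A \<le> card ?U" using card_inj_on_le[OF inj img] by simp
  hence AU: "?A \<subseteq> ?U" by auto
  have "card (?U - ?A) = card (?U - f ` ?A)"
    using card_Diff_subset[OF _ AU] card_Diff_subset[OF _ img] card_image[OF inj] by simp
  then obtain h where h: "bij_betw h (?U - ?A) (?U - f ` ?A)"
    using finite_same_card_bij by blast
  define p where "p x = (if x \<in> ?A then f x else if x \<in> ?U then h x else x)" for x
  have "bij_betw p ?A (f ` ?A)"
    using inj_on_imp_bij_betw[OF inj] by (rule bij_betw_cong[THEN iffD2, rotated]) (simp add: p_def)
  moreover have "bij_betw p (?U - ?A) (?U - f ` ?A)"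
    using h by (rule bij_betw_cong[THEN iffD2, rotated]) (simp add: p_def)
  ultimately have "bij_betw p (?A \<union> (?U - ?A)) (f ` ?A \<union> (?U - f ` ?A))"
    by (rule bij_betw_combine) auto
  moreover have "?A \<union> (?U - ?A) = ?U" "f ` ?A \<union> (?U - f ` ?A) = ?U" using AU img by auto
  ultimately have "bij_betw p ?U ?U" by simp
  hence "p permutes ?U" by (rule bij_imp_permutes) (use AU in \<open>auto simp: p_def\<close>)
  moreover have "extends k p f" by (simp add: extends_def p_def)
  ultimately show ?thesis by blast
qed

lemma finite_extension_distances:
  "finite {perm_dist N p q | p q. p permutes {1..N} \<and> q permutes {1..N} \<and> extends k p f \<and> extends k q g}"
proof -
  have "{perm_dist N p q | p q. p permutes {1..N} \<and> q permutes {1..N} \<and> extends k p f \<and> extends k q g}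
    \<subseteq> (\<lambda>(p,q). perm_dist N p q) ` ({p. p permutes {1..N}} \<times> {q. q permutes {1..N}})" by auto
  moreover have "finite ({p. p permutes {1..N::nat}} \<times> {q. q permutes {1..N}})"
    using finite_permutations by blast
  ultimately show ?thesis by (meson finite_surj)
qed

lemma unc_adj_witness:
  assumes f: "f \<in> partial_perms N k" and g: "g \<in> partial_perms N k" and adj: "unc_adj N l k f g"
  obtains p q where "p permutes {1..N}" "q permutes {1..N}" "extends k p f" "extends k q g"
    "perm_dist N p q \<le> l"
proof -
  let ?S = "{perm_dist N p q | p q. p permutes {1..N} \<and> q permutes {1..N} \<and> extends k p f \<and> extends k q g}"
  have "?S \<noteq> {}" using partial_perm_extends[OF f] partial_perm_extends[OF g] by blast
  hence "Min ?S \<in> ?S" using Min_in[OF finite_extension_distances] by blast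
  moreover have "Min ?S \<le> l" using adj by (simp add: unc_adj_def partial_dist_def)
  ultimately show ?thesis using that by force
qed

lemma perm_dist_ge:
  assumes "v \<in> {1..N}"
  shows "nat \<bar>int (inv p v) - int (inv q v)\<bar> \<le> perm_dist N p q"
  unfolding perm_dist_def using assms by (intro Max_ge) auto

lemma restrict_partial_perm:
  assumes "f \<in> partial_perms N k" "k' \<le> k"
  shows "restrict f {1..k'} \<in> partial_perms N k'"
proof -
  have "{1..k'} \<subseteq> {1..k}" using assms(2) by auto
  thus ?thesis using assms(1)
    by (auto simp: partial_perms_def restrict_PiE_iff PiE_iff inj_on_restrict_eq intro: inj_on_subset)
qed

text \<open>Restriction to a nonempty prefix preserves adjacency: extensions of the long maps also
  extend the restrictions.\<close>
lemma unc_adj_restrict: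
  assumes f: "f \<in> partial_perms N k" and g: "g \<in> partial_perms N k" and adj: "unc_adj N l k f g"
    and k': "1 \<le> k'" "k' \<le> k"
  shows "unc_adj N l k' (restrict f {1..k'}) (restrict g {1..k'})"
proof -
  obtain p q where pq: "p permutes {1..N}" "q permutes {1..N}" "extends k p f" "extends k q g"
    "perm_dist N p q \<le> l"
    using unc_adj_witness[OF f g adj] by blast
  have "extends k' p (restrict f {1..k'})" "extends k' q (restrict g {1..k'})"
    using pq(3,4) k' by (auto simp: extends_def)
  hence "partial_dist N k' (restrict f {1..k'}) (restrict g {1..k'}) \<le> perm_dist N p q"
    unfolding partial_dist_def using pq(1,2) by (intro Min_le[OF finite_extension_distances]) blast
  moreover have "f 1 \<noteq> g 1" using adj by (simp add: unc_adj_def)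
  ultimately show ?thesis using pq(5) k' by (simp add: unc_adj_def)
qed

definition near_restrictions :: "nat \<Rightarrow> nat \<Rightarrow> nat \<Rightarrow> (nat \<Rightarrow> nat) \<Rightarrow> (nat \<Rightarrow> nat) set" where
  "near_restrictions N l k' f =
     {h \<in> partial_perms N k'. \<forall>j\<in>{1..k'}. \<exists>i\<in>{1..k'+l}. j \<le> i + l \<and> i \<le> j + l \<and> h j = f i}"

text \<open>If f and g are adjacent in U_{N,l,k'+l}, the restriction of g to [k'] is near f: a
  value g j sits at distance at most l from its position under f, and within [k'+l].\<close>
lemma restrict_near:
  assumes f: "f \<in> partial_perms N (k'+l)" and g: "g \<in> partial_perms N (k'+l)"
    and adj: "unc_adj N l (k'+l) f g"
  shows "restrict g {1..k'} \<in> near_restrictions N l k' f"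
proof -
  obtain p q where pq: "p permutes {1..N}" "q permutes {1..N}" "extends (k'+l) p f"
    "extends (k'+l) q g" "perm_dist N p q \<le> l"
    using unc_adj_witness[OF f g adj] by blast
  have "\<exists>i\<in>{1..k'+l}. j \<le> i + l \<and> i \<le> j + l \<and> g j = f i" if j: "j \<in> {1..k'}" for j
  proof -
    define v where "v = g j"
    have v: "v \<in> {1..N}" using g j by (auto simp: partial_perms_def PiE_def Pi_def v_def)
    have "q j = v" using pq(4) j by (auto simp: extends_def v_def)
    hence qv: "inv q v = j" using permutes_inv_eq[OF pq(2)] by simp
    define i where "i = inv p v"
    have pi: "p i = v" using permutes_inverses[OF pq(1)] i_def by simp
    have iN: "i \<in> {1..N}" using permutes_in_image[OF permutes_inv[OF pq(1)]] v i_def by simp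
    have "nat \<bar>int i - int j\<bar> \<le> l" using perm_dist_ge[OF v, of p q] pq(5) qv i_def by simp
    hence ij: "j \<le> i + l" "i \<le> j + l" by auto
    hence i: "i \<in> {1..k'+l}" using iN j by auto
    moreover have "f i = v" using pq(3) i pi by (auto simp: extends_def)
    ultimately show ?thesis using ij by (auto simp: v_def)
  qed
  moreover have "restrict g {1..k'} \<in> partial_perms N k'" using restrict_partial_perm[OF g] by simp
  ultimately show ?thesis unfolding near_restrictions_def by auto
qed

text \<open>There are at most (2l+1)^k' restrictions near f: each is f composed with a choice of a
  position in [j-l, j+l] for every j \<in> [k'].\<close>
lemma near_restrictions_card:
  "finite (near_restrictions N l k' f) \<and> card (near_restrictions N l k' f) \<le> (2*l+1)^k'"
proof -
  let ?P = "PiE {1..k'} (\<lambda>j. {j-l..j+l})"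
  have sub: "near_restrictions N l k' f \<subseteq> (\<lambda>\<sigma>. restrict (f \<circ> \<sigma>) {1..k'}) ` ?P"
  proof
    fix h assume h: "h \<in> near_restrictions N l k' f"
    hence hx: "h \<in> extensional {1..k'}" by (simp add: near_restrictions_def partial_perms_def PiE_def)
    have "\<forall>j\<in>{1..k'}. \<exists>i. j \<le> i + l \<and> i \<le> j + l \<and> h j = f i"
      using h by (auto simp: near_restrictions_def)
    then obtain \<sigma> where \<sigma>: "\<And>j. j \<in> {1..k'} \<Longrightarrow> j \<le> \<sigma> j + l \<and> \<sigma> j \<le> j + l \<and> h j = f (\<sigma> j)"
      by metis
    have "restrict \<sigma> {1..k'} \<in> ?P" using \<sigma> by fastforce
    moreover have "h = restrict (f \<circ> restrict \<sigma> {1..k'}) {1..k'}"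
      using \<sigma> hx by (auto simp: extensional_def)
    ultimately show "h \<in> (\<lambda>\<sigma>. restrict (f \<circ> \<sigma>) {1..k'}) ` ?P" by blast
  qed
  have fin: "finite ?P" by (rule finite_PiE) auto
  have "card ?P = (\<Prod>j\<in>{1..k'}. card {j-l..j+l})" by (rule card_PiE) simp
  also have "\<dots> \<le> (\<Prod>j\<in>{1..k'}. 2*l+1)" by (rule prod_mono) auto
  finally have "card ?P \<le> (2*l+1)^k'" by simp
  moreover have "card (near_restrictions N l k' f) \<le> card ?P"
    using card_mono[OF finite_imageI[OF fin] sub] card_image_le[OF fin] le_trans by blast
  ultimately show ?thesis using finite_subset[OF sub finite_imageI[OF fin]] by simp
qed

text \<open>Words of length T over an alphabet of size Q agreeing with a fixed word c in at least s
  positions: choose the s positions, then the remaining letters freely.\<close>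
lemma agreeing_words_card:
  fixes T s Q :: nat and c :: "nat \<Rightarrow> nat"
  shows "card {w \<in> PiE {..<T} (\<lambda>_. {..<Q}). s \<le> card {t. t<T \<and> w t = c t}} \<le> (T choose s) * Q^(T-s)"
proof -
  define I where "I = {S. S \<subseteq> {..<T} \<and> card S = s}"
  define P where "P S = PiE {..<T} (\<lambda>t. if t\<in>S then {c t} else {..<Q})" for S
  have sub: "{w \<in> PiE {..<T} (\<lambda>_. {..<Q}). s \<le> card {t. t<T \<and> w t = c t}} \<subseteq> (\<Union>S\<in>I. P S)"
  proof
    fix w assume w: "w \<in> {w \<in> PiE {..<T} (\<lambda>_. {..<Q}). s \<le> card {t. t<T \<and> w t = c t}}"
    hence "s \<le> card {t. t<T \<and> w t = c t}" by simp
    then obtain S where S: "S \<subseteq> {t. t<T \<and> w t = c t}" "card S = s"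
      by (rule obtain_subset_with_card_n)
    hence "S \<in> I" by (auto simp: I_def)
    moreover have "w \<in> P S" using w S unfolding P_def by (auto simp: PiE_iff)
    ultimately show "w \<in> (\<Union>S\<in>I. P S)" by blast
  qed
  have finI: "finite I" unfolding I_def by (rule finite_subset[of _ "Pow {..<T}"]) auto
  have cardP: "card (P S) = Q^(T-s)" if "S \<in> I" for S
  proof -
    have S: "S \<subseteq> {..<T}" "card S = s" using that by (auto simp: I_def)
    have "card (P S) = (\<Prod>t\<in>{..<T}. card (if t\<in>S then {c t} else {..<Q}))"
      unfolding P_def by (rule card_PiE) simp
    also have "\<dots> = (\<Prod>t\<in>{..<T}. if t\<in>S then 1 else Q)" by (rule prod.cong) auto
    also have "\<dots> = Q ^ card ({..<T} - S)"
      by (simp add: prod.If_cases Diff_eq)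
    also have "card ({..<T} - S) = T - s" using S by (simp add: card_Diff_subset finite_subset)
    finally show ?thesis .
  qed
  have "finite (\<Union>S\<in>I. P S)" using finI unfolding P_def by (auto intro!: finite_PiE)
  hence "card {w \<in> PiE {..<T} (\<lambda>_. {..<Q}). s \<le> card {t. t<T \<and> w t = c t}} \<le> card (\<Union>S\<in>I. P S)"
    using sub by (rule card_mono)
  also have "\<dots> \<le> (\<Sum>S\<in>I. card (P S))" by (rule card_UN_le[OF finI])
  also have "\<dots> = card I * Q^(T-s)" by (simp add: cardP)
  also have "card I = T choose s" unfolding I_def using n_subsets[of "{..<T}" s] by simp
  finally show ?thesis .
qed

text \<open>Greedy step of the code construction: fewer than 2^s words of length T over 2T letters
  rule out fewer than (2T)^T words, so some word agrees with each of them in fewer than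
  s positions.\<close>
lemma code_word_extension:
  fixes E :: "nat \<Rightarrow> nat \<Rightarrow> nat"
  assumes T: "1 \<le> T" and M: "M < 2^s"
  shows "\<exists>w\<in>PiE {..<T} (\<lambda>_. {..<2*T}). \<forall>a<M. card {t. t<T \<and> w t = E a t} < s"
proof -
  define W where "W = PiE {..<T} (\<lambda>_. {..<2*T})"
  define bad where "bad a = {w \<in> W. s \<le> card {t. t<T \<and> w t = E a t}}" for a
  have finW: "finite W" unfolding W_def by (rule finite_PiE) auto
  have "card (\<Union>a<M. bad a) \<le> (\<Sum>a<M. card (bad a))" by (rule card_UN_le) simp
  also have "\<dots> \<le> (\<Sum>a<M. (T choose s) * (2*T)^(T-s))"
    unfolding bad_def W_def by (rule sum_mono) (rule agreeing_words_card)
  also have "\<dots> = M * ((T choose s) * (2*T)^(T-s))" by simp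
  also have "\<dots> < (2*T)^T"
  proof (cases "s \<le> T")
    case True
    have "M * ((T choose s) * (2*T)^(T-s)) \<le> M * (T^s * (2*T)^(T-s))"
      using binomial_le_pow[OF True] by simp
    also have "\<dots> < 2^s * (T^s * (2*T)^(T-s))"
      using M T by (intro mult_strict_right_mono) auto
    also have "\<dots> = (2*T)^s * (2*T)^(T-s)" by (simp add: power_mult_distrib mult_ac)
    also have "\<dots> = (2*T)^T" using True by (metis le_add_diff_inverse power_add)
    finally show ?thesis .
  qed (use T in \<open>simp add: binomial_eq_0\<close>)
  also have "(2*T)^T = card W" by (simp add: W_def card_PiE)
  finally have "\<not> W \<subseteq> (\<Union>a<M. bad a)"
    using card_mono[of "\<Union>a<M. bad a" W] finite_subset[OF _ finW] by (force simp: bad_def)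
  then obtain w where "w \<in> W" "w \<notin> (\<Union>a<M. bad a)" by blast
  thus ?thesis unfolding W_def bad_def by (auto simp: not_le)
qed

lemma code_exists:
  assumes T: "1 \<le> T" and M: "M \<le> 2^s"
  shows "\<exists>E::nat\<Rightarrow>nat\<Rightarrow>nat. (\<forall>a<M. \<forall>t<T. E a t < 2*T) \<and>
     (\<forall>a<M. \<forall>b<M. a \<noteq> b \<longrightarrow> card {t. t<T \<and> E a t = E b t} < s)"
  using M
proof (induction M)
  case (Suc M)
  then obtain E where E_range: "\<forall>a<M. \<forall>t<T. E a t < 2*T"
    and E_agree: "\<forall>a<M. \<forall>b<M. a \<noteq> b \<longrightarrow> card {t. t<T \<and> E a t = E b t} < s" by auto
  obtain w where w: "w \<in> PiE {..<T} (\<lambda>_. {..<2*T})" "\<forall>a<M. card {t. t<T \<and> w t = E a t} < s"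
    using code_word_extension[OF T, of M s E] Suc.prems by auto
  have sym: "{t. t<T \<and> E a t = w t} = {t. t<T \<and> w t = E a t}" for a by auto
  have "(\<forall>a<Suc M. \<forall>t<T. (E(M := w)) a t < 2*T) \<and>
     (\<forall>a<Suc M. \<forall>b<Suc M. a \<noteq> b \<longrightarrow> card {t. t<T \<and> (E(M := w)) a t = (E(M := w)) b t} < s)"
    using E_range E_agree w sym by (auto simp: less_Suc_eq PiE_iff)
  thus ?case by blast
qed simp

lemma separating_coordinate:
  fixes E :: "nat \<Rightarrow> nat \<Rightarrow> nat"
  assumes C: "finite C" and agree: "\<forall>b\<in>C. card {t. t<T \<and> E b t = E a t} < s"
    and small: "card C * (s - 1) < T"
  shows "\<exists>t<T. \<forall>b\<in>C. E b t \<noteq> E a t"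
proof -
  define Bad where "Bad = (\<Union>b\<in>C. {t. t<T \<and> E b t = E a t})"
  have "card Bad \<le> (\<Sum>b\<in>C. card {t. t<T \<and> E b t = E a t})"
    unfolding Bad_def using C by (rule card_UN_le)
  also have "\<dots> \<le> (\<Sum>b\<in>C. s - 1)" using agree by (intro sum_mono) fastforce
  also have "\<dots> < card {..<T}" using small by simp
  finally have "\<not> {..<T} \<subseteq> Bad"
    using card_mono[of Bad "{..<T}"] C by (auto simp: Bad_def)
  thus ?thesis by (auto simp: Bad_def)
qed

definition proper_colouring :: "'a set \<Rightarrow> ('a \<Rightarrow> 'a \<Rightarrow> bool) \<Rightarrow> ('a \<Rightarrow> nat) \<Rightarrow> bool" where
  "proper_colouring V E col \<longleftrightarrow> (\<forall>u\<in>V. \<forall>v\<in>V. E u v \<longrightarrow> col u \<noteq> col v)"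

lemma separating_coordinate_near:
  fixes E :: "nat \<Rightarrow> nat \<Rightarrow> nat"
  assumes D: "(2*l+1)^k' \<le> D" and s: "1 \<le> s"
    and col_range: "\<forall>v\<in>partial_perms N k'. col v < M"
    and E_agree: "\<forall>a<M. \<forall>b<M. a \<noteq> b \<longrightarrow> card {t. t < D*s \<and> E a t = E b t} < s"
    and h: "h \<in> partial_perms N k'"
  shows "\<exists>t < D*s. \<forall>g\<in>near_restrictions N l k' f. col g \<noteq> col h \<longrightarrow> E (col g) t \<noteq> E (col h) t"
proof -
  define C where "C = col ` {g \<in> near_restrictions N l k' f. col g \<noteq> col h}"
  have "finite (near_restrictions N l k' f)" "card (near_restrictions N l k' f) \<le> D"
    using near_restrictions_card[of N l k' f] D by auto
  hence "finite C" and C_card: "card C \<le> D"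
    unfolding C_def by (auto intro: card_image_le[THEN le_trans] card_mono[THEN le_trans])
  moreover have "\<forall>b\<in>C. card {t. t < D*s \<and> E b t = E (col h) t} < s"
    using E_agree col_range h by (auto simp: C_def near_restrictions_def)
  moreover have "card C * (s - 1) < D*s"
  proof -
    have "1 \<le> D" using D by (metis le_trans one_le_power le_add2 add.commute)
    have "card C * (s - 1) \<le> D * (s - 1)" using C_card by (rule mult_le_mono1)
    also have "\<dots> < D*s" using \<open>1 \<le> D\<close> s by (simp add: diff_mult_distrib2)
    finally show ?thesis .
  qed
  ultimately obtain t where "t < D*s" "\<forall>b\<in>C. E b t \<noteq> E (col h) t"
    using separating_coordinate by blast
  thus ?thesis by (auto simp: C_def)
qed

text \<open>The new colour of f is the pair (t, E a t), where a is
  the colour of f restricted to [k'] and t separates a from the colours of all restrictions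
  near f; two adjacent f, g with the same pair would contradict that choice of t.\<close>
lemma colouring_round:
  assumes k': "1 \<le> k'" and D: "(2*l+1)^k' \<le> D" and s: "1 \<le> s" "M \<le> 2^s"
    and col_range: "\<forall>v\<in>partial_perms N k'. col v < M"
    and col_proper: "proper_colouring (partial_perms N k') (unc_adj N l k') col"
  shows "\<exists>col'. (\<forall>v\<in>partial_perms N (k'+l). col' v < 2*(D*s)*(D*s))
           \<and> proper_colouring (partial_perms N (k'+l)) (unc_adj N l (k'+l)) col'"
proof -
  define T where "T = D*s"
  have "1 \<le> D" using D by (metis le_trans one_le_power le_add2 add.commute)
  hence T1: "1 \<le> T" using s by (simp add: T_def)
  obtain E where E_range: "\<forall>a<M. \<forall>t<T. E a t < 2*T"
    and E_agree: "\<forall>a<M. \<forall>b<M. a \<noteq> b \<longrightarrow> card {t. t<T \<and> E a t = E b t} < s"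
    using code_exists[OF T1 s(2)] by blast
  define r where "r f = restrict f {1..k'}" for f :: "nat \<Rightarrow> nat"
  define sep where "sep f t \<longleftrightarrow> t < T \<and>
    (\<forall>g\<in>near_restrictions N l k' f. col g \<noteq> col (r f) \<longrightarrow> E (col g) t \<noteq> E (col (r f)) t)" for f t
  define tf where "tf f = (LEAST t. sep f t)" for f
  define col' where "col' f = tf f * (2*T) + E (col (r f)) (tf f)" for f
  have r_mem: "r f \<in> partial_perms N k'" if "f \<in> partial_perms N (k'+l)" for f
    using restrict_partial_perm[OF that] by (simp add: r_def)
  have sep_tf: "sep f (tf f)" if "f \<in> partial_perms N (k'+l)" for f
    using separating_coordinate_near[OF D s(1) col_range E_agree[unfolded T_def] r_mem[OF that], of f]
    unfolding tf_def by (metis LeastI sep_def T_def)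
  have letter: "E (col (r f)) (tf f) < 2*T" if "f \<in> partial_perms N (k'+l)" for f
    using E_range col_range r_mem[OF that] sep_tf[OF that] by (simp add: sep_def)
  have "col' f < 2*(D*s)*(D*s)" if f: "f \<in> partial_perms N (k'+l)" for f
  proof -
    have "col' f < (tf f + 1) * (2*T)" using letter[OF f] by (simp add: col'_def)
    also have "\<dots> \<le> T * (2*T)" using sep_tf[OF f] by (intro mult_right_mono) (auto simp: sep_def)
    finally show ?thesis by (simp add: T_def)
  qed
  moreover have "proper_colouring (partial_perms N (k'+l)) (unc_adj N l (k'+l)) col'"
    unfolding proper_colouring_def
  proof (intro ballI impI notI)
    fix f g assume f: "f \<in> partial_perms N (k'+l)" and g: "g \<in> partial_perms N (k'+l)"
      and adj: "unc_adj N l (k'+l) f g" and same: "col' f = col' g"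
    have "col' f div (2*T) = tf f" "col' f mod (2*T) = E (col (r f)) (tf f)"
      "col' g div (2*T) = tf g" "col' g mod (2*T) = E (col (r g)) (tf g)"
      using letter[OF f] letter[OF g] by (simp_all add: col'_def)
    hence same_letter: "E (col (r g)) (tf f) = E (col (r f)) (tf f)" using same by metis
    have "unc_adj N l k' (r f) (r g)" unfolding r_def by (rule unc_adj_restrict[OF f g adj k']) simp
    hence "col (r f) \<noteq> col (r g)"
      using col_proper r_mem[OF f] r_mem[OF g] by (auto simp: proper_colouring_def)
    moreover have "r g \<in> near_restrictions N l k' f" unfolding r_def by (rule restrict_near[OF f g adj])
    ultimately show False using sep_tf[OF f] same_letter by (auto simp: sep_def)
  qed
  ultimately show ?thesis by blast
qed

text \<open>The round with a real bound R on the number of colours: choose s \<approx> log R + 1.\<close>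
lemma colouring_round_real:
  fixes R :: real
  assumes k': "1 \<le> k'" and D: "(2*l+1)^k' \<le> D" and R: "1 \<le> R"
    and col_range: "\<forall>v\<in>partial_perms N k'. real (col v) < R"
    and col_proper: "proper_colouring (partial_perms N k') (unc_adj N l k') col"
  shows "\<exists>col'. (\<forall>v\<in>partial_perms N (k'+l). real (col' v) < 2 * real D ^ 2 * (log 2 R + 2)^2)
           \<and> proper_colouring (partial_perms N (k'+l)) (unc_adj N l (k'+l)) col'"
proof -
  define s where "s = nat \<lceil>log 2 R\<rceil> + 1"
  have s1: "1 \<le> s" by (simp add: s_def)
  have s: "log 2 R \<le> real s" "real s \<le> log 2 R + 2" using R by (simp_all add: s_def) linarith+
  have "R = 2 powr (log 2 R)" using R by simp
  also have "\<dots> \<le> 2 powr (real s)" using s by (intro powr_mono) auto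
  finally have "R \<le> real (2^s)" by (simp add: powr_realpow)
  hence "\<forall>v\<in>partial_perms N k'. col v < 2^s"
    using col_range by (metis of_nat_less_iff order_less_le_trans)
  then obtain col' where col': "\<forall>v\<in>partial_perms N (k'+l). col' v < 2*(D*s)*(D*s)"
      "proper_colouring (partial_perms N (k'+l)) (unc_adj N l (k'+l)) col'"
    using colouring_round[OF k' D s1 order.refl _ col_proper] by blast
  have "real (2*(D*s)*(D*s)) = 2 * real D^2 * (real s)^2" by (simp add: power2_eq_square)
  also have "\<dots> \<le> 2 * real D^2 * (log 2 R + 2)^2"
    using s R by (intro mult_left_mono power_mono) auto
  finally have "\<forall>v\<in>partial_perms N (k'+l). real (col' v) < 2 * real D ^ 2 * (log 2 R + 2)^2"
    using col'(1) by (metis of_nat_less_iff order_less_le_trans)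
  with col'(2) show ?thesis by blast
qed

lemma chromatic_number_le:
  assumes "\<forall>v\<in>V. col v < n" "proper_colouring V E col"
  shows "chromatic_number V E \<le> n"
  unfolding chromatic_number_def
  by (rule Least_le) (use assms in \<open>auto simp: proper_colouring_def\<close>)

lemma chromatic_number_le_real:
  fixes R :: real
  assumes "\<forall>v\<in>V. real (col v) < R" "proper_colouring V E col" "1 \<le> R"
  shows "real (chromatic_number V E) \<le> 2 * R"
proof -
  have "\<forall>v\<in>V. col v < nat \<lceil>R\<rceil>"
  proof
    fix v assume "v \<in> V"
    hence "real (col v) < R" using assms(1) by blast
    hence "real (col v) < of_int \<lceil>R\<rceil>" using le_of_int_ceiling[of R] by linarith
    hence "int (col v) < \<lceil>R\<rceil>" by (metis of_int_less_iff of_int_of_nat_eq)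
    thus "col v < nat \<lceil>R\<rceil>" by (simp add: zless_nat_eq_int_zless)
  qed
  hence "chromatic_number V E \<le> nat \<lceil>R\<rceil>" using assms(2) by (rule chromatic_number_le)
  hence "real (chromatic_number V E) \<le> R + 1" using assms(3) by linarith
  thus ?thesis using assms(3) by simp
qed

lemma first_value_colouring:
  assumes "1 \<le> k"
  shows "(\<forall>v\<in>partial_perms N k. v 1 - 1 < N)
    \<and> proper_colouring (partial_perms N k) (unc_adj N l k) (\<lambda>v. v 1 - 1)"
proof
  have first: "v 1 \<in> {1..N}" if "v \<in> partial_perms N k" for v
    using that assms by (auto simp: partial_perms_def PiE_iff)
  thus "\<forall>v\<in>partial_perms N k. v 1 - 1 < N" by fastforce
  have "u 1 - 1 \<noteq> v 1 - 1" if "u \<in> partial_perms N k" "v \<in> partial_perms N k" "u 1 \<noteq> v 1" for u v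
    using first[OF that(1)] first[OF that(2)] that(3) by auto
  thus "proper_colouring (partial_perms N k) (unc_adj N l k) (\<lambda>v. v 1 - 1)"
    by (simp add: proper_colouring_def unc_adj_def)
qed

text \<open>ln 2 \<ge> 1/2, since exp (1/2) \<le> 2.\<close>
lemma ln_2_ge_half: "1/2 \<le> ln (2::real)"
proof -
  have "exp (1/2::real) \<le> 2" using exp_bound_half[of "1/2::real"] by simp
  thus ?thesis by (subst ln_ge_iff) auto
qed

text \<open>Squaring one iterated logarithm step costs at most a constant factor: with u = sqrt x,
  log x = 2 log u \<le> 4 (u - 1) since ln u \<le> u - 1.\<close>
lemma log2_squared_le:
  fixes x :: real assumes x: "1 \<le> x"
  shows "(max 1 (log 2 x))^2 \<le> 16 * x"
proof -
  define u where "u = sqrt x"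
  have u1: "1 \<le> u" and xu: "x = u^2" using x by (simp_all add: u_def)
  have "ln u \<le> (2*(u-1)) * ln 2"
    using ln_le_minus_one[of u] mult_left_mono[OF ln_2_ge_half, of "2*u-2"] u1
    by (simp add: algebra_simps)
  hence "log 2 u \<le> 2 * (u - 1)" by (simp add: log_def pos_divide_le_eq)
  hence "log 2 x \<le> 4 * u" using u1 xu by (simp add: log_nat_power)
  hence "(log 2 x)^2 \<le> (4 * u)^2" using x by (intro power_mono) auto
  also have "\<dots> = 16 * x" using xu by (simp add: power_mult_distrib)
  finally have "(log 2 x)^2 \<le> 16 * x" .
  thus ?thesis using x by (auto simp: max_def)
qed

text \<open>The polynomial factor (4\<delta>+28)^2 arising in a later round is at most 2^(2\<delta>+23).\<close>
lemma square_le_power_of_two: "(4*d+28::nat)^2 \<le> 2^(2*d+23)"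
proof (induction d)
  case (Suc d)
  have "(4*Suc d+28::nat)^2 \<le> (2*(4*d+28))^2" by (intro power_mono) auto
  also have "\<dots> = 4 * (4*d+28)^2" by (simp add: power2_eq_square algebra_simps)
  also have "\<dots> \<le> 2^(2*Suc d+23)" using Suc by (simp add: power_add)
  finally show ?case .
qed simp

lemma ilog_nat_ge_1: "1 \<le> x \<Longrightarrow> 1 \<le> ilog_nat t x"
  by (cases t) auto

text \<open>Arithmetic of the first round, started from N colours, with D = 2^\<delta>.\<close>
lemma first_round_bound:
  fixes x :: real assumes x: "1 \<le> x"
  shows "2 * ((2::real)^\<delta>)^2 * (log 2 x + 2)^2 \<le> 2^(4*\<delta>+24) * (ilog_nat 1 x)^2"
proof -
  define y where "y = ilog_nat 1 x"
  have y: "y = max 1 (log 2 x)" "0 \<le> log 2 x" using x by (simp_all add: y_def)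
  have "(log 2 x + 2)^2 \<le> (3 * y)^2" using y by (intro power_mono) auto
  hence "2 * ((2::real)^\<delta>)^2 * (log 2 x + 2)^2 \<le> 2 * (2^\<delta>)^2 * (9 * y^2)"
    by (simp add: power_mult_distrib)
  also have "\<dots> = 18 * 2^(2*\<delta>) * y^2" by (simp add: power_mult mult.commute)
  also have "\<dots> \<le> 2^(4*\<delta>+24) * y^2"
  proof -
    have "(18::real) * 2^(2*\<delta>) \<le> 2^24 * 2^(4*\<delta>)"
      by (intro mult_mono power_increasing) auto
    thus ?thesis by (intro mult_right_mono) (auto simp: power_add mult.commute)
  qed
  finally show ?thesis by (simp add: y_def)
qed

text \<open>Arithmetic of a later round: starting from 2^(4\<delta>+24) y^2 colours, the round gives at most
  2^(4\<delta>+24) (max 1 (log y))^2 colours again, one logarithm further down.\<close>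
lemma later_round_bound:
  fixes y :: real assumes y: "1 \<le> y"
  shows "2 * ((2::real)^\<delta>)^2 * (log 2 (2^(4*\<delta>+24) * y^2) + 2)^2 \<le> 2^(4*\<delta>+24) * (max 1 (log 2 y))^2"
proof -
  define y' where "y' = max 1 (log 2 y)"
  have y': "1 \<le> y'" "log 2 y \<le> y'" by (simp_all add: y'_def)
  have log_eq: "log 2 (2^(4*\<delta>+24) * y^2) = 4 * real \<delta> + 24 + 2 * log 2 y"
    using y by (simp add: log_mult log_nat_power)
  have "4 * real \<delta> + 26 \<le> (4 * real \<delta> + 26) * y'" using y' by (simp add: mult_le_cancel_left1)
  hence "0 \<le> log 2 (2^(4*\<delta>+24) * y^2) + 2" "log 2 (2^(4*\<delta>+24) * y^2) + 2 \<le> (4 * real \<delta> + 28) * y'"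
    using y y' log_eq by (simp_all add: algebra_simps)
  hence "(log 2 (2^(4*\<delta>+24) * y^2) + 2)^2 \<le> (4 * real \<delta> + 28)^2 * y'^2"
    by (metis power_mono power_mult_distrib)
  also have "\<dots> \<le> 2^(2*\<delta>+23) * y'^2"
  proof (rule mult_right_mono)
    have "real ((4*\<delta>+28)^2) \<le> real (2^(2*\<delta>+23))"
      using square_le_power_of_two[of \<delta>] by (simp only: of_nat_le_iff)
    thus "(4 * real \<delta> + 28)^2 \<le> 2^(2*\<delta>+23)" by simp
  qed simp
  finally have "2 * ((2::real)^\<delta>)^2 * (log 2 (2^(4*\<delta>+24) * y^2) + 2)^2
      \<le> 2 * (2^\<delta>)^2 * (2^(2*\<delta>+23) * y'^2)" by simp
  also have "\<dots> = 2^(1 + \<delta>*2 + (2*\<delta>+23)) * y'^2"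
    by (simp only: power_mult power_add power_one_right mult.assoc)
  also have "1 + \<delta>*2 + (2*\<delta>+23) = 4*\<delta>+24" by simp
  finally show ?thesis by (simp add: y'_def)
qed

text \<open>The iterated rounds: starting from the first-value colouring of U_{N,l,\<kappa>}, after t rounds
  U_{N,l,\<kappa>+tl} has a proper colouring with fewer than 2^(4\<delta>+24) (log^(t) N)^2 colours, as long
  as 2^\<delta> bounds the number (2l+1)^k' of nearby restrictions in every round.\<close>
lemma colouring_rounds:
  assumes \<kappa>: "1 \<le> \<kappa>" and N: "0 < N" and D: "(2*l+1)^(\<kappa> + m*l) \<le> 2^\<delta>"
    and t: "1 \<le> t" "t \<le> m"
  shows "\<exists>col. (\<forall>v\<in>partial_perms N (\<kappa> + t*l). real (col v) < 2^(4*\<delta>+24) * (ilog_nat t (real N))^2)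
           \<and> proper_colouring (partial_perms N (\<kappa> + t*l)) (unc_adj N l (\<kappa> + t*l)) col"
proof -
  have D_le: "(2*l+1)^k' \<le> 2^\<delta>" if "k' \<le> \<kappa> + m*l" for k'
  proof -
    have "(2*l+1)^k' \<le> (2*l+1)^(\<kappa> + m*l)" using that by (intro power_increasing) auto
    thus ?thesis using D by linarith
  qed
  show ?thesis
    using t(1)
  proof (induction t rule: dec_induct)
    case base
    have first: "\<forall>v\<in>partial_perms N \<kappa>. real (v 1 - 1) < real N"
        "proper_colouring (partial_perms N \<kappa>) (unc_adj N l \<kappa>) (\<lambda>v. v 1 - 1)"
      using first_value_colouring[OF \<kappa>] by auto
    obtain col' where col': "\<forall>v\<in>partial_perms N (\<kappa>+l).
          real (col' v) < 2 * real (2^\<delta>::nat) ^ 2 * (log 2 N + 2)^2"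
        "proper_colouring (partial_perms N (\<kappa>+l)) (unc_adj N l (\<kappa>+l)) col'"
      using colouring_round_real[OF \<kappa> D_le[OF le_add1] _ first] N by auto
    have bound: "2 * real (2^\<delta>::nat) ^ 2 * (log 2 N + 2)^2 \<le> 2^(4*\<delta>+24) * (ilog_nat 1 (real N))^2"
      using first_round_bound[of "real N" \<delta>] N by simp
    have "\<forall>v\<in>partial_perms N (\<kappa>+l). real (col' v) < 2^(4*\<delta>+24) * (ilog_nat 1 (real N))^2"
      using col'(1) bound by fastforce
    thus ?case using col'(2) by auto
  next
    case (step n)
    let ?R = "2^(4*\<delta>+24) * (ilog_nat n (real N))^2 :: real"
    obtain col where col: "\<forall>v\<in>partial_perms N (\<kappa> + n*l). real (col v) < ?R"
        "proper_colouring (partial_perms N (\<kappa> + n*l)) (unc_adj N l (\<kappa> + n*l)) col"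
      using step.IH by blast
    have y: "1 \<le> ilog_nat n (real N)" using N by (intro ilog_nat_ge_1) simp
    have "1 * 1 \<le> ?R" by (rule mult_mono) (use y in \<open>auto simp: one_le_power\<close>)
    hence R: "1 \<le> ?R" by simp
    have n_le: "\<kappa> + n*l \<le> \<kappa> + m*l" using step.hyps t(2) by simp
    have n_pos: "1 \<le> \<kappa> + n*l" using \<kappa> by simp
    obtain col' where col': "\<forall>v\<in>partial_perms N (\<kappa> + n*l + l).
          real (col' v) < 2 * real (2^\<delta>::nat) ^ 2 * (log 2 ?R + 2)^2"
        "proper_colouring (partial_perms N (\<kappa> + n*l + l)) (unc_adj N l (\<kappa> + n*l + l)) col'"
      using colouring_round_real[OF n_pos D_le[OF n_le] R col] by blast
    have bound: "2 * real (2^\<delta>::nat) ^ 2 * (log 2 ?R + 2)^2 \<le> 2^(4*\<delta>+24) * (ilog_nat (Suc n) (real N))^2"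
      using later_round_bound[OF y, of \<delta>] by simp
    have "\<forall>v\<in>partial_perms N (\<kappa> + n*l + l). real (col' v) < 2^(4*\<delta>+24) * (ilog_nat (Suc n) (real N))^2"
      using col'(1) bound by fastforce
    moreover have "\<kappa> + Suc n * l = \<kappa> + n*l + l" by simp
    ultimately show ?case using col'(2) by metis
  qed
qed

text \<open>With L = \<lceil>log (l+1)\<rceil>, the (2l+1)^k nearby restrictions number at most 2^(2kL), since
  2l+1 \<le> (l+1)^2 \<le> 4^L.\<close>
lemma near_count_le_power_of_two:
  "(2*l+1)^k \<le> (2::nat)^(2*k*nat \<lceil>log 2 (real l + 1)\<rceil>)"
proof -
  define L where "L = nat \<lceil>log 2 (real l + 1)\<rceil>"
  have "real l + 1 = 2 powr (log 2 (real l + 1))" by simp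
  also have "\<dots> \<le> 2 powr real L" unfolding L_def by (intro powr_mono real_nat_ceiling_ge) simp
  also have "\<dots> = real (2^L)" by (simp add: powr_realpow)
  finally have "l + 1 \<le> 2^L" by linarith
  have "2*l+1 \<le> (l+1)^2" by (simp add: power2_eq_square)
  also have "\<dots> \<le> (2^L)^2" using \<open>l + 1 \<le> 2^L\<close> by (rule power_mono) simp
  finally have "2*l+1 \<le> 2^(2*L)" by (simp add: power_mult mult.commute)
  hence "(2*l+1)^k \<le> (2^(2*L))^k" by (rule power_mono) simp
  also have "\<dots> = 2^(2*k*L)" by (simp add: mult_ac flip: power_mult)
  finally show ?thesis by (simp add: L_def)
qed

text \<open>The constant: 8kL + 29 \<le> 45 k log (l+1), using L \<le> 2 log (l+1) and k log (l+1) \<ge> 1.\<close>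
lemma exponent_le:
  assumes l: "0 < l" and k: "0 < k"
  shows "real (8*k*nat \<lceil>log 2 (real l + 1)\<rceil> + 29) \<le> 45 * real k * log 2 (real l + 1)"
proof -
  define lg where "lg = log 2 (real l + 1)"
  have lg: "1 \<le> lg" using l by (simp add: lg_def)
  have "real (nat \<lceil>lg\<rceil>) \<le> 2 * lg" using lg of_int_ceiling_le_add_one[of lg] by linarith
  hence "real k * real (nat \<lceil>lg\<rceil>) \<le> real k * (2 * lg)" by (rule mult_left_mono) simp
  moreover have "1 * 1 \<le> real k * lg" using lg k by (intro mult_mono) auto
  ultimately show ?thesis by (simp add: lg_def algebra_simps)
qed

text \<open>After m \<ge> 1 rounds the chromatic number is at most 2^(4\<delta>+29) log^(m-1) N: the last
  squared logarithm is absorbed by log2_squared_le.\<close>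
lemma chromatic_number_after_rounds:
  assumes \<kappa>: "1 \<le> \<kappa>" and N: "0 < N" and m: "1 \<le> m" and D: "(2*l+1)^(\<kappa> + m*l) \<le> 2^\<delta>"
  shows "real (chromatic_number (partial_perms N (\<kappa> + m*l)) (unc_adj N l (\<kappa> + m*l)))
    \<le> 2^(4*\<delta>+29) * ilog_nat (m - 1) (real N)"
proof -
  let ?y = "ilog_nat (m - 1) (real N)"
  obtain col where col: "\<forall>v\<in>partial_perms N (\<kappa> + m*l). real (col v) < 2^(4*\<delta>+24) * (ilog_nat m (real N))^2"
      "proper_colouring (partial_perms N (\<kappa> + m*l)) (unc_adj N l (\<kappa> + m*l)) col"
    using colouring_rounds[OF \<kappa> N D m order.refl] by blast
  have y: "1 \<le> ?y" "1 \<le> ilog_nat m (real N)" using N by (simp_all add: ilog_nat_ge_1)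
  have "1 * 1 \<le> (2::real)^(4*\<delta>+24) * (ilog_nat m (real N))^2"
    by (rule mult_mono) (use y in \<open>auto simp: one_le_power\<close>)
  hence "real (chromatic_number (partial_perms N (\<kappa> + m*l)) (unc_adj N l (\<kappa> + m*l)))
      \<le> 2 * (2^(4*\<delta>+24) * (ilog_nat m (real N))^2)"
    using chromatic_number_le_real[OF col] by simp
  also have "ilog_nat m (real N) = max 1 (log 2 ?y)" using m by (cases m) auto
  also have "2 * (2^(4*\<delta>+24) * (max 1 (log 2 ?y))^2) \<le> 2 * (2^(4*\<delta>+24) * (16 * ?y))"
    using log2_squared_le[OF y(1)] by simp
  also have "\<dots> = 2^(4*\<delta>+29) * ?y" by (simp add: power_add)
  finally show ?thesis .
qed

text \<open>When k \<le> l, the colouring by the first value suffices;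
  otherwise write k = \<kappa> + m l with 1 \<le> \<kappa> and m = (k-1) div l \<ge> 1 and run m rounds.\<close>
lemma chromatic_number_bound:
  assumes N: "0 < N" and l: "0 < l" and k: "0 < k"
  shows "real (chromatic_number (partial_perms N k) (unc_adj N l k))
    \<le> 2 powr (45 * real k * log 2 (real l + 1)) * ilog (int ((k - 1) div l) - 1) (real N)"
proof -
  define m where "m = (k - 1) div l"
  define \<delta> where "\<delta> = 2*k*nat \<lceil>log 2 (real l + 1)\<rceil>"
  have factor: "1 \<le> 2 powr (45 * real k * log 2 (real l + 1))"
    using l by (intro ge_one_powr_ge_zero) auto
  show ?thesis
  proof (cases "m = 0")
    case True
    have "chromatic_number (partial_perms N k) (unc_adj N l k) \<le> N"
      using first_value_colouring[of k N l] k by (intro chromatic_number_le) auto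
    hence "real (chromatic_number (partial_perms N k) (unc_adj N l k)) \<le> 1 * real N" by simp
    also have "\<dots> \<le> 2 powr (45 * real k * log 2 (real l + 1)) * real N"
      using factor by (rule mult_right_mono) simp
    finally show ?thesis using True by (simp add: m_def ilog_def)
  next
    case False
    define \<kappa> where "\<kappa> = k - m*l"
    have "m*l \<le> k - 1" by (simp add: m_def)
    hence \<kappa>: "1 \<le> \<kappa>" and k_eq: "\<kappa> + m*l = k" using k by (auto simp: \<kappa>_def)
    have m: "1 \<le> m" using False by simp
    have "(2*l+1)^(\<kappa> + m*l) \<le> 2^\<delta>"
      unfolding \<delta>_def k_eq by (rule near_count_le_power_of_two)
    from chromatic_number_after_rounds[OF \<kappa> N m this]
    have "real (chromatic_number (partial_perms N k) (unc_adj N l k)) \<le> 2^(4*\<delta>+29) * ilog_nat (m - 1) (real N)"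
      by (simp only: k_eq)
    also have "(2::real)^(4*\<delta>+29) \<le> 2 powr (45 * real k * log 2 (real l + 1))"
    proof -
      have exp_eq: "4*\<delta>+29 = 8*k*nat \<lceil>log 2 (real l + 1)\<rceil> + 29" by (simp add: \<delta>_def)
      have "(2::real)^(4*\<delta>+29) = 2 powr real (8*k*nat \<lceil>log 2 (real l + 1)\<rceil> + 29)"
        unfolding exp_eq by (rule powr_realpow[symmetric]) simp
      also have "\<dots> \<le> 2 powr (45 * real k * log 2 (real l + 1))"
        using exponent_le[OF l k] by (rule powr_mono) simp
      finally show ?thesis .
    qed
    hence "2^(4*\<delta>+29) * ilog_nat (m - 1) (real N)
        \<le> 2 powr (45 * real k * log 2 (real l + 1)) * ilog_nat (m - 1) (real N)"
      using N by (intro mult_right_mono) (simp_all add: ilog_nat_ge_1 order_trans[OF zero_le_one])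
    also have "ilog_nat (m - 1) (real N) = ilog (int m - 1) (real N)"
      by (simp add: ilog_def nat_diff_distrib')
    finally show ?thesis by (simp only: m_def)
  qed
qed

theorem lemma1p5:
  shows "\<exists>c::real. \<forall>N l k :: nat. 0 < N \<longrightarrow> 0 < l \<longrightarrow> 0 < k \<longrightarrow> k \<le> N \<longrightarrow>
    real (chromatic_number (partial_perms N k) (unc_adj N l k))
      \<le> 2 powr (c * real k * log 2 (real l + 1)) * ilog (int ((k - 1) div l) - 1) (real N)"
proof (intro exI[of _ 45] allI impI)
  fix N l k :: nat
  assume "0 < N" "0 < l" "0 < k" "k \<le> N"
  from this(1-3) show "real (chromatic_number (partial_perms N k) (unc_adj N l k))
      \<le> 2 powr (45 * real k * log 2 (real l + 1)) * ilog (int ((k - 1) div l) - 1) (real N)"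
    by (rule chromatic_number_bound)
qed

end
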